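(* Let $\beta>\alpha>0$ and let $q=(q_1,q_2,q_3,q_4)\in(\mathbb{R}^2)^4$ be a convex non-collinear central configuration of the planar Newtonian 4-body problem with masses $m_1=m_2=\beta$, $m_3=m_4=\alpha$, the vertices being labelled so that $q_1,q_2,q_3,q_4$ is the cyclic order around the convex quadrilateral (so the equal masses occupy adjacent vertices). If $r_{14}=r_{23}$, then the configuration is symmetric and forms an isosceles trapezoid: the side $q_1q_2$ is parallel to the side $q_3q_4$ (and $r_{14}=r_{23}$).
   Context: Bodies have positions $q_i\in\mathbb{R}^2$ and masses $m_i>0$, $i=1,\dots,4$; $r_{ij}=\|q_i-q_j\|$. The Newtonian potential is $U(q)=\sum_{i<j}m_im_j/r_{ij}$ (gravitational constant $1$). A configuration $q$ with $q_i\neq q_j$ for all $i\neq j$ and center of mass $\sum_i m_iq_i=0$ is a central configuration if there is a constant $\lambda$ with $\frac{1}{m_i}\frac{\partial U}{\partial q_i}=\lambda q_i$ for all $i$, i.e. $\sum_{j\neq i} m_j\frac{q_j-q_i}{r_{ij}^3}=\lambda q_i$. "Convex non-collinear" means the four points are the vertices of a strictly convex quadrilateral (no three of them collinear). *)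

theory Defs
  imports "HOL-Analysis.Analysis"
begin

definition cross2 :: "real^2 \<Rightarrow> real^2 \<Rightarrow> real" where
  "cross2 a b = a$1 * b$2 - a$2 * b$1"

definition orient :: "real^2 \<Rightarrow> real^2 \<Rightarrow> real^2 \<Rightarrow> real" where
  "orient a b c = cross2 (b - a) (c - a)"

definition central_config :: "(nat \<Rightarrow> real) \<Rightarrow> (nat \<Rightarrow> real^2) \<Rightarrow> bool" where
  "central_config m q \<longleftrightarrow>
     (\<forall>i\<in>{1..4}. \<forall>j\<in>{1..4}. i \<noteq> j \<longrightarrow> q i \<noteq> q j) \<and>
     (\<Sum>i=1..4. m i *\<^sub>R q i) = 0 \<and>
     (\<exists>lam. \<forall>i\<in>{1..4}.
        (\<Sum>j\<in>{1..4} - {i}. (m j / dist (q i) (q j) ^ 3) *\<^sub>R (q j - q i)) = lam *\<^sub>R q i)"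

text \<open>q1,q2,q3,q4 are, in this cyclic order, the vertices of a strictly convex
  quadrilateral (no three collinear): for every side, the two remaining vertices
  lie strictly on the same side of the line through that side.\<close>
definition convex_quad :: "real^2 \<Rightarrow> real^2 \<Rightarrow> real^2 \<Rightarrow> real^2 \<Rightarrow> bool" where
  "convex_quad a b c d \<longleftrightarrow>
     orient a b c * orient a b d > 0 \<and>
     orient b c d * orient b c a > 0 \<and>
     orient c d a * orient c d b > 0 \<and>
     orient d a b * orient d a c > 0"

end

theory Submission
  imports Defs
begin

text \<open>Write \<open>S\<^sub>i\<^sub>j = r\<^sub>i\<^sub>j\<^sup>-\<^sup>3 + \<lambda>/M\<close> with \<open>M\<close> the total mass. Since the centre of mass is at the
  origin, the equation of body \<open>i\<close> becomes \<open>\<Sum>\<^sub>j\<^sub>\<noteq>\<^sub>i m\<^sub>j S\<^sub>i\<^sub>j (q\<^sub>j - q\<^sub>i) = 0\<close>, and taking the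
  cross product with \<open>q\<^sub>b - q\<^sub>i\<close> yields linear relations between the signed areas
  \<open>\<Delta>\<^sub>i\<^sub>b\<^sub>j\<close>. For the bodies 1, 2, 3, 4 and using \<open>S\<^sub>2\<^sub>3 = S\<^sub>1\<^sub>4\<close>, they say that both
  \<open>(\<Delta>\<^sub>1\<^sub>2\<^sub>3, \<Delta>\<^sub>1\<^sub>2\<^sub>4)\<close> and \<open>(\<Delta>\<^sub>3\<^sub>4\<^sub>1, \<Delta>\<^sub>3\<^sub>4\<^sub>2)\<close> lie in the kernel of the symmetric matrix
  \<open>[[S\<^sub>1\<^sub>3, S\<^sub>1\<^sub>4], [S\<^sub>1\<^sub>4, S\<^sub>2\<^sub>4]]\<close>. If the two vectors are independent the matrix vanishes, so
  \<open>q\<^sub>3\<close> and \<open>q\<^sub>4\<close> are equidistant from \<open>q\<^sub>1\<close> and from \<open>q\<^sub>2\<close> on the same side of \<open>q\<^sub>1q\<^sub>2\<close>,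
  whence \<open>\<Delta>\<^sub>1\<^sub>2\<^sub>3 = \<Delta>\<^sub>1\<^sub>2\<^sub>4\<close>. If they are dependent, the identity
  \<open>\<Delta>\<^sub>1\<^sub>2\<^sub>3 - \<Delta>\<^sub>1\<^sub>2\<^sub>4 + \<Delta>\<^sub>3\<^sub>4\<^sub>1 - \<Delta>\<^sub>3\<^sub>4\<^sub>2 = 0\<close> and the signs imposed by convexity give the
  same equation. Either way \<open>q\<^sub>1q\<^sub>2 \<parallel> q\<^sub>3q\<^sub>4\<close>.\<close>

lemma cross2_sum_scaleR_right:
  "cross2 u (\<Sum>j\<in>J. w j *\<^sub>R v j) = (\<Sum>j\<in>J. w j * cross2 u (v j))"
  by (simp add: cross2_def sum_distrib_left sum_subtractf algebra_simps)

lemma orient_swap: "orient b a c = - orient a b c"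
  by (simp add: orient_def cross2_def algebra_simps)

lemma orient_rotate: "orient b c a = orient a b c"
  by (simp add: orient_def cross2_def algebra_simps)

lemma orient_degenerate: "orient a b b = 0" "orient a b a = 0"
  by (simp_all add: orient_def cross2_def)

lemma cross2_diff_eq_orient: "cross2 (b - a) (d - c) = orient a b d - orient a b c"
  by (simp add: orient_def cross2_def algebra_simps)

lemma orient_quad_sum: "orient a b c - orient a b d + orient c d a - orient c d b = 0"
  by (simp add: orient_def cross2_def algebra_simps)

lemma dist_sq_coords: "dist (x::real^2) y ^ 2 = (x$1 - y$1)^2 + (x$2 - y$2)^2"
  unfolding dist_norm power2_norm_eq_inner by (simp add: inner_vec_def sum_2 power2_eq_square)

lemma orient_sq_dist:
  "orient a b c ^ 2 = dist a b ^ 2 * dist a c ^ 2 - ((dist a b ^ 2 + dist a c ^ 2 - dist b c ^ 2) / 2) ^ 2"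
  unfolding dist_sq_coords orient_def cross2_def by (simp add: field_simps power2_eq_square)

lemma orient_eq_if_equidistant:
  assumes "dist a c = dist a d" "dist b c = dist b d" "orient a b c * orient a b d > 0"
  shows "orient a b c = orient a b d"
proof -
  have "orient a b c ^ 2 = orient a b d ^ 2"
    using assms(1,2) by (simp add: orient_sq_dist)
  then have "orient a b c = orient a b d \<or> orient a b c = - orient a b d"
    by (simp add: power2_eq_iff)
  then show ?thesis
    using assms(3) by (auto simp: mult_less_0_iff)
qed

text \<open>With the centre of mass at the origin, \<open>\<Sum>\<^sub>j\<^sub>\<noteq>\<^sub>i m\<^sub>j (q\<^sub>j - q\<^sub>i) = -M q\<^sub>i\<close>, so the term
  \<open>\<lambda> q\<^sub>i\<close> of the central configuration equation can be absorbed into the weights.\<close>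

lemma balance_shift:
  fixes q :: "nat \<Rightarrow> 'a::real_vector"
  assumes "finite I" "i \<in> I" "(\<Sum>j\<in>I. m j *\<^sub>R q j) = 0" "sum m I \<noteq> 0"
    and "(\<Sum>j\<in>I-{i}. (m j * k j) *\<^sub>R (q j - q i)) = lam *\<^sub>R q i"
  shows "(\<Sum>j\<in>I-{i}. (m j * (k j + lam / sum m I)) *\<^sub>R (q j - q i)) = 0"
proof -
  have "(\<Sum>j\<in>I-{i}. m j *\<^sub>R (q j - q i)) = (\<Sum>j\<in>I. m j *\<^sub>R (q j - q i))"
    using assms(1,2) by (simp add: sum.remove)
  also have "\<dots> = - sum m I *\<^sub>R q i"
    using assms(3) by (simp add: scaleR_diff_right sum_subtractf scaleR_left.sum)
  finally have mass: "(\<Sum>j\<in>I-{i}. m j *\<^sub>R (q j - q i)) = - sum m I *\<^sub>R q i" .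
  have "(\<Sum>j\<in>I-{i}. (m j * (k j + lam / sum m I)) *\<^sub>R (q j - q i))
      = (\<Sum>j\<in>I-{i}. (m j * k j) *\<^sub>R (q j - q i)) + (lam / sum m I) *\<^sub>R (\<Sum>j\<in>I-{i}. m j *\<^sub>R (q j - q i))"
    by (simp add: distrib_left scaleR_add_left sum.distrib scaleR_right.sum mult.commute)
  also have "\<dots> = 0"
    using assms(4,5) mass by simp
  finally show ?thesis .
qed

lemma balance_orient:
  assumes "(\<Sum>j\<in>J. w j *\<^sub>R (q j - p)) = 0"
  shows "(\<Sum>j\<in>J. w j * orient p b (q j)) = 0"
  using arg_cong[OF assms, of "cross2 (b - p)"]
  by (simp add: orient_def cross2_sum_scaleR_right) (simp add: cross2_def)

lemma central_config_orient_relations: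
  assumes "central_config m q" and "sum m {1..4} \<noteq> 0"
  obtains c where
    "m 3 * (1 / dist (q 1) (q 3) ^ 3 + c) * orient (q 1) (q 2) (q 3)
       + m 4 * (1 / dist (q 1) (q 4) ^ 3 + c) * orient (q 1) (q 2) (q 4) = 0"
    "m 3 * (1 / dist (q 2) (q 3) ^ 3 + c) * orient (q 1) (q 2) (q 3)
       + m 4 * (1 / dist (q 2) (q 4) ^ 3 + c) * orient (q 1) (q 2) (q 4) = 0"
    "m 1 * (1 / dist (q 1) (q 3) ^ 3 + c) * orient (q 3) (q 4) (q 1)
       + m 2 * (1 / dist (q 2) (q 3) ^ 3 + c) * orient (q 3) (q 4) (q 2) = 0"
    "m 1 * (1 / dist (q 1) (q 4) ^ 3 + c) * orient (q 3) (q 4) (q 1)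
       + m 2 * (1 / dist (q 2) (q 4) ^ 3 + c) * orient (q 3) (q 4) (q 2) = 0"
proof -
  obtain lam where lam: "\<forall>i\<in>{1..4}.
      (\<Sum>j\<in>{1..4} - {i}. (m j / dist (q i) (q j) ^ 3) *\<^sub>R (q j - q i)) = lam *\<^sub>R q i"
    using assms(1) unfolding central_config_def by blast
  define c where "c = lam / sum m {1..4}"
  have body: "(\<Sum>j\<in>{1..4} - {i}. m j * (1 / dist (q i) (q j) ^ 3 + c) * orient (q i) (q b) (q j)) = 0"
    if "i \<in> {1..4}" for i b
  proof -
    have "(\<Sum>j\<in>{1..4} - {i}. (m j * (1 / dist (q i) (q j) ^ 3)) *\<^sub>R (q j - q i)) = lam *\<^sub>R q i"
      using lam that by simp
    from balance_orient[OF balance_shift[OF _ that _ assms(2) this]] assms(1)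
    show ?thesis unfolding central_config_def c_def by simp
  qed
  have four: "{1..4::nat} = {1, 2, 3, 4}" by auto
  show ?thesis
  proof
    show "m 3 * (1 / dist (q 1) (q 3) ^ 3 + c) * orient (q 1) (q 2) (q 3)
       + m 4 * (1 / dist (q 1) (q 4) ^ 3 + c) * orient (q 1) (q 2) (q 4) = 0"
      using body[of 1 2, unfolded four] by (simp add: insert_Diff_if orient_degenerate)
    show "m 3 * (1 / dist (q 2) (q 3) ^ 3 + c) * orient (q 1) (q 2) (q 3)
       + m 4 * (1 / dist (q 2) (q 4) ^ 3 + c) * orient (q 1) (q 2) (q 4) = 0"
      using body[of 2 1, unfolded four] by (simp add: insert_Diff_if orient_degenerate orient_swap[of "q 2"])
    show "m 1 * (1 / dist (q 1) (q 3) ^ 3 + c) * orient (q 3) (q 4) (q 1)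
       + m 2 * (1 / dist (q 2) (q 3) ^ 3 + c) * orient (q 3) (q 4) (q 2) = 0"
      using body[of 3 4, unfolded four] by (simp add: insert_Diff_if orient_degenerate dist_commute)
    show "m 1 * (1 / dist (q 1) (q 4) ^ 3 + c) * orient (q 3) (q 4) (q 1)
       + m 2 * (1 / dist (q 2) (q 4) ^ 3 + c) * orient (q 3) (q 4) (q 2) = 0"
      using body[of 4 3, unfolded four]
      by (simp add: insert_Diff_if orient_degenerate orient_swap[of "q 4"] dist_commute)
  qed
qed

lemma symmetric_kernel_cases:
  fixes a t b x y u v :: real
  assumes "a * x + t * y = 0" "t * x + b * y = 0" "a * u + t * v = 0" "t * u + b * v = 0"
    and "x - y + u - v = 0" "x * y > 0" "x * v > 0"
  shows "x = y \<or> (a = 0 \<and> t = 0 \<and> b = 0)"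
proof (cases "x * v = u * y")
  case True
  have "u = y + v - x" using assms(5) by simp
  with True have "(x - y) * (y + v) = 0" by (simp add: algebra_simps)
  moreover have "y * v > 0"
    using assms(6,7) by (simp add: zero_less_mult_iff) linarith
  then have "y + v \<noteq> 0"
    by (auto simp: zero_less_mult_iff)
  ultimately show ?thesis by simp
next
  case False
  have "a * (x * v - u * y) = (a * x + t * y) * v - (a * u + t * v) * y"
    and "t * (x * v - u * y) = (t * x + b * y) * v - (t * u + b * v) * y"
    and "b * (x * v - u * y) = (t * u + b * v) * x - (t * x + b * y) * u"
    by (simp_all add: algebra_simps)
  then have "a * (x * v - u * y) = 0" "t * (x * v - u * y) = 0" "b * (x * v - u * y) = 0"
    by (simp_all only: assms(1-4) mult_zero_left diff_self)
  then show ?thesis using False by simp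
qed

lemma convex_quad_orient_signs:
  assumes "convex_quad a b c d"
  shows "orient a b c * orient a b d > 0" "orient a b c * orient c d b > 0"
proof -
  have "orient c d b = orient b c d" "orient b c a = orient a b c"
    by (simp_all add: orient_rotate)
  then show "orient a b c * orient a b d > 0" "orient a b c * orient c d b > 0"
    using assms unfolding convex_quad_def by (simp_all add: mult.commute)
qed

theorem theorem1p2:
  fixes m :: "nat \<Rightarrow> real" and q :: "nat \<Rightarrow> real^2" and \<alpha> \<beta> :: real
  assumes "0 < \<alpha>" and "\<alpha> < \<beta>"
    and "m 1 = \<beta>" and "m 2 = \<beta>" and "m 3 = \<alpha>" and "m 4 = \<alpha>"
    and "central_config m q"
    and "convex_quad (q 1) (q 2) (q 3) (q 4)"
    and "dist (q 1) (q 4) = dist (q 2) (q 3)"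
  shows "cross2 (q 2 - q 1) (q 4 - q 3) = 0 \<and> dist (q 1) (q 4) = dist (q 2) (q 3)"
proof -
  have "sum m {1..4} \<noteq> 0"
    using assms(1-6) by (simp add: numeral_eq_Suc)
  then obtain c where rel:
    "\<alpha> * (1 / dist (q 1) (q 3) ^ 3 + c) * orient (q 1) (q 2) (q 3)
       + \<alpha> * (1 / dist (q 1) (q 4) ^ 3 + c) * orient (q 1) (q 2) (q 4) = 0"
    "\<alpha> * (1 / dist (q 2) (q 3) ^ 3 + c) * orient (q 1) (q 2) (q 3)
       + \<alpha> * (1 / dist (q 2) (q 4) ^ 3 + c) * orient (q 1) (q 2) (q 4) = 0"
    "\<beta> * (1 / dist (q 1) (q 3) ^ 3 + c) * orient (q 3) (q 4) (q 1)
       + \<beta> * (1 / dist (q 2) (q 3) ^ 3 + c) * orient (q 3) (q 4) (q 2) = 0"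
    "\<beta> * (1 / dist (q 1) (q 4) ^ 3 + c) * orient (q 3) (q 4) (q 1)
       + \<beta> * (1 / dist (q 2) (q 4) ^ 3 + c) * orient (q 3) (q 4) (q 2) = 0"
    using central_config_orient_relations[OF assms(7)] assms(3-6) by metis
  let ?S = "\<lambda>i j. 1 / dist (q i) (q j) ^ 3 + c"
  have "?S 2 3 = ?S 1 4"
    using assms(9) by simp
  with rel assms(1,2) have
    "?S 1 3 * orient (q 1) (q 2) (q 3) + ?S 1 4 * orient (q 1) (q 2) (q 4) = 0"
    "?S 1 4 * orient (q 1) (q 2) (q 3) + ?S 2 4 * orient (q 1) (q 2) (q 4) = 0"
    "?S 1 3 * orient (q 3) (q 4) (q 1) + ?S 1 4 * orient (q 3) (q 4) (q 2) = 0"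
    "?S 1 4 * orient (q 3) (q 4) (q 1) + ?S 2 4 * orient (q 3) (q 4) (q 2) = 0"
    by (simp_all add: mult.assoc flip: distrib_left)
  from symmetric_kernel_cases[OF this orient_quad_sum convex_quad_orient_signs[OF assms(8)]]
  have "orient (q 1) (q 2) (q 3) = orient (q 1) (q 2) (q 4)"
  proof
    assume "?S 1 3 = 0 \<and> ?S 1 4 = 0 \<and> ?S 2 4 = 0"
    with \<open>?S 2 3 = ?S 1 4\<close> have "1 / dist (q 1) (q 3) ^ 3 = 1 / dist (q 1) (q 4) ^ 3"
      "1 / dist (q 2) (q 3) ^ 3 = 1 / dist (q 2) (q 4) ^ 3"
      by linarith+
    then have "dist (q 1) (q 3) = dist (q 1) (q 4)" "dist (q 2) (q 3) = dist (q 2) (q 4)"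
      by (simp_all add: power_eq_iff_eq_base)
    then show ?thesis
      using orient_eq_if_equidistant convex_quad_orient_signs(1)[OF assms(8)] by blast
  qed
  then show ?thesis
    using assms(9) by (simp add: cross2_diff_eq_orient)
qed

end
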